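(* Let $D$ be a quadratic discriminant and $\mathcal{O}_D$ the associated quadratic order. Suppose that every rational prime number $p$ satisfying \[ p \le \begin{cases} \sqrt{|D|/3} & \text{if } D<0,\\ \sqrt{D/5} & \text{if } D>0\end{cases} \] that is irreducible in $\mathcal{O}_D$ is also prime in $\mathcal{O}_D$. Then $\mathcal{O}_D$ is a unique factorization domain.
   Context: A quadratic discriminant is a nonsquare integer $D$ with $D\equiv 0$ or $1 \pmod 4$. Write $D=4d+\sigma$ with $\sigma\in\{0,1\}$ and $d\in\mathbb{Z}$, and let $\tau=\frac{\sigma+\sqrt{D}}{2}$. Then $\mathcal{O}_D=\mathbb{Z}[\tau]=\mathbb{Z}+\mathbb{Z}\tau=\{\frac{u+v\sqrt{D}}{2}: u,v\in\mathbb{Z},\ u\equiv vD \pmod 2\}$. In a domain $R$, an element $\pi$ is irreducible if it is nonzero, not a unit, and whenever $\pi=\alpha\beta$ with $\alpha,\beta\in R$ one of $\alpha,\beta$ is a unit; $\pi$ is prime if it is nonzero, not a unit, and $\pi\mid\alpha\beta$ implies $\pi\mid\alpha$ or $\pi\mid\beta$. *)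

theory Defs
  imports Complex_Main "HOL-Computational_Algebra.Primes" "HOL-Algebra.Ring_Divisibility"
begin

definition quad_disc :: "int \<Rightarrow> bool" where
  "quad_disc D \<longleftrightarrow> (D mod 4 = 0 \<or> D mod 4 = 1) \<and> \<not> (\<exists>k::int. D = k ^ 2)"

definition quad_order :: "int \<Rightarrow> complex set" where
  "quad_order D = {(of_int u + of_int v * csqrt (of_int D)) / 2 | u v :: int. even (u - v * D)}"

definition quad_ring :: "int \<Rightarrow> complex ring" where
  "quad_ring D = \<lparr> carrier = quad_order D, monoid.mult = (*), one = 1, zero = 0, add = (+) \<rparr>"

end

theory Submission
  imports Defs "HOL-Computational_Algebra.Nth_Powers"
begin

text \<open>
  It suffices that every irreducible element is prime, since the norm makes divisor chains
  finite. This follows once every ideal (\<alpha>, \<beta>) with \<alpha> \<noteq> 0 is principal, generated by an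
  element \<gamma> of least absolute norm. If some \<delta> in the ideal were not a multiple of \<gamma>,
  peeling off the prime factors of |N \<gamma>| yields a prime p with p \<delta> = \<gamma> \<omega> but \<gamma> not
  dividing \<delta>. Minimality of \<gamma> forces every nonzero element of J = (p, \<omega>) to have norm at
  least p^2 in absolute value; then J = (p, k + \<tau>) with p dividing N(k + \<tau>). Reducing the
  binary quadratic form N on J gives p \<le> sqrt(|D|/3) resp. sqrt(D/5), and since no element has
  norm \<plusminus>p, p is irreducible. By hypothesis p is prime, yet p divides (k + \<tau>)(k + \<sigma> - \<tau>)
  = N(k + \<tau>) without dividing either factor.
\<close>

lemma square_if_square_eq_mult_square:
  fixes a b D :: int
  assumes "a^2 = D * b^2" "b \<noteq> 0"
  shows "\<exists>k. D = k^2"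
proof -
  have "is_nth_power 2 (D * b^2)"
    using assms(1) by (metis is_nth_powerI)
  hence "is_nth_power 2 D"
    using assms(2) by (simp add: is_nth_power_mult_cancel_right)
  thus ?thesis
    by (auto elim: is_nth_powerE)
qed

lemma abs_eq_prime_if_mult_eq_prime_square:
  fixes m n p :: int
  assumes "Factorial_Ring.prime p" "m * n = p^2" "\<bar>m\<bar> \<noteq> 1" "\<bar>n\<bar> \<noteq> 1"
  shows "\<bar>m\<bar> = p"
proof -
  have "m dvd p^2"
    using assms(2) by (metis dvd_triv_left)
  then obtain i where i: "i \<le> 2" "normalize m = p^i"
    using divides_primepow[OF assms(1)] by blast
  have "\<bar>m\<bar> * \<bar>n\<bar> = p^2"
    using arg_cong[OF assms(2), of abs] by (simp add: abs_mult)
  moreover have "i = 0 \<or> i = 1 \<or> i = 2"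
    using i(1) by auto
  ultimately show ?thesis
    using i assms(3,4) prime_gt_0_int[OF assms(1)] by auto
qed

locale quadratic_order =
  fixes D :: int
  assumes quad_disc: "quad_disc D"
begin

abbreviation OD :: "complex set" where "OD \<equiv> quad_order D"
abbreviation RD :: "complex ring" where "RD \<equiv> quad_ring D"

definition sigma :: int where "sigma = D mod 4"
definition d :: int where "d = D div 4"

lemma sigma_cases: "sigma = 0 \<or> sigma = 1"
  using quad_disc unfolding quad_disc_def sigma_def by auto

lemma sigma_squared: "sigma * sigma = sigma"
  using sigma_cases by auto

lemma D_eq: "D = 4 * d + sigma"
  unfolding d_def sigma_def by simp

lemma square_eq_D_mult_square: "a^2 = D * b^2 \<Longrightarrow> b = 0"
  using quad_disc square_if_square_eq_mult_square unfolding quad_disc_def by blast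

lemma D_nonzero: "D \<noteq> 0"
  using square_eq_D_mult_square[of 0 1] by auto

definition tau :: complex where "tau = (of_int sigma + csqrt (of_int D)) / 2"

definition elt :: "int \<Rightarrow> int \<Rightarrow> complex" where "elt x y = of_int x + of_int y * tau"

definition qform :: "int \<Rightarrow> int \<Rightarrow> int" where "qform x y = x^2 + sigma * x * y - d * y^2"

lemma tau_squared: "tau * tau = of_int sigma * tau + of_int d"
proof -
  have "2 * tau - of_int sigma = csqrt (of_int D)"
    unfolding tau_def by (simp add: field_simps)
  hence "(2 * tau - of_int sigma) * (2 * tau - of_int sigma) = of_int (4 * d + sigma)"
    by (metis D_eq power2_csqrt power2_eq_square)
  moreover have "(of_int sigma :: complex) * of_int sigma = of_int sigma"
    by (metis of_int_mult sigma_squared)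
  ultimately have "4 * (tau * tau) = 4 * (of_int sigma * tau + of_int d)"
    by (simp add: algebra_simps)
  thus ?thesis
    by (simp only: mult_cancel_left) simp
qed

lemma csqrt_D_rational_combination_eq_0:
  "of_int a + of_int b * csqrt (of_int D) = (0::complex) \<Longrightarrow> b = 0"
proof -
  assume "of_int a + of_int b * csqrt (of_int D) = (0::complex)"
  hence "of_int b * csqrt (of_int D) = - (of_int a :: complex)"
    by (simp add: eq_neg_iff_add_eq_0 add.commute)
  hence "(of_int b * csqrt (of_int D))^2 = (of_int a ^ 2 :: complex)"
    by simp
  hence "of_int (D * b^2) = (of_int (a^2) :: complex)"
    by (simp add: power_mult_distrib power2_csqrt mult.commute)
  hence "a^2 = D * b^2"
    by (simp only: of_int_eq_iff)
  thus "b = 0" by (rule square_eq_D_mult_square)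
qed

lemma elt_eq_iff: "elt x y = elt x' y' \<longleftrightarrow> x = x' \<and> y = y'"
proof
  assume eq: "elt x y = elt x' y'"
  have "of_int (2 * (x - x') + (y - y') * sigma) + of_int (y - y') * csqrt (of_int D)
      = 2 * (elt x y - elt x' y')"
    unfolding elt_def tau_def by (simp add: field_simps)
  hence "of_int (2 * (x - x') + (y - y') * sigma) + of_int (y - y') * csqrt (of_int D) = (0::complex)"
    using eq by simp
  hence "y - y' = 0"
    by (rule csqrt_D_rational_combination_eq_0)
  thus "x = x' \<and> y = y'"
    using eq unfolding elt_def by simp
qed simp

lemma elt_mult: "elt x1 y1 * elt x2 y2 = elt (x1 * x2 + d * y1 * y2) (x1 * y2 + x2 * y1 + sigma * y1 * y2)"
proof -
  have "elt x1 y1 * elt x2 y2 = of_int x1 * of_int x2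
      + (of_int x1 * of_int y2 + of_int x2 * of_int y1) * tau + of_int y1 * of_int y2 * (tau * tau)"
    unfolding elt_def by (simp add: algebra_simps)
  thus ?thesis
    unfolding tau_squared elt_def by (simp add: algebra_simps)
qed

lemma elt_add: "elt x1 y1 + elt x2 y2 = elt (x1 + x2) (y1 + y2)"
  unfolding elt_def by (simp add: algebra_simps)

lemma elt_uminus: "- elt x y = elt (- x) (- y)"
  unfolding elt_def by (simp add: algebra_simps)

lemma of_int_eq_elt: "of_int n = elt n 0"
  unfolding elt_def by simp

lemma elt_eq_0_iff: "elt x y = 0 \<longleftrightarrow> x = 0 \<and> y = 0"
  using elt_eq_iff[of x y 0 0] by (simp add: elt_def)

lemma of_int_mult_elt: "of_int n * elt x y = elt (n * x) (n * y)"
  unfolding elt_def by (simp add: algebra_simps)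

lemma quad_order_iff: "z \<in> OD \<longleftrightarrow> (\<exists>x y. z = elt x y)"
proof
  assume "z \<in> OD"
  then obtain u v where z: "z = (of_int u + of_int v * csqrt (of_int D)) / 2"
    and uv: "even (u - v * D)"
    unfolding quad_order_def by auto
  have "v * D = v * (4 * d + sigma)"
    using D_eq by (rule arg_cong)
  hence "u - v * sigma = (u - v * D) + 2 * (2 * v * d)"
    by (simp add: algebra_simps)
  also have "even \<dots>"
    using uv by simp
  finally obtain x where "u - v * sigma = 2 * x"
    by blast
  hence "z = elt x v"
    unfolding z elt_def tau_def by (simp add: field_simps)
  thus "\<exists>x y. z = elt x y" by blast
next
  assume "\<exists>x y. z = elt x y"
  then obtain x y where z: "z = elt x y" by blast
  have "z = (of_int (2 * x + y * sigma) + of_int y * csqrt (of_int D)) / 2"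
    unfolding z elt_def tau_def by (simp add: field_simps)
  moreover have "y * D = y * (4 * d + sigma)"
    using D_eq by (rule arg_cong)
  hence "even ((2 * x + y * sigma) - y * D)"
    by (simp add: algebra_simps)
  ultimately show "z \<in> OD"
    unfolding quad_order_def by blast
qed

lemma elt_in_OD [simp]: "elt x y \<in> OD"
  using quad_order_iff by blast

lemma mult_in_OD: "z \<in> OD \<Longrightarrow> w \<in> OD \<Longrightarrow> z * w \<in> OD"
  unfolding quad_order_iff by (metis elt_mult)

lemma add_in_OD: "z \<in> OD \<Longrightarrow> w \<in> OD \<Longrightarrow> z + w \<in> OD"
  unfolding quad_order_iff by (metis elt_add)

lemma uminus_in_OD: "z \<in> OD \<Longrightarrow> - z \<in> OD"
  unfolding quad_order_iff by (metis elt_uminus)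

lemma of_int_in_OD [simp]: "of_int n \<in> OD"
  unfolding of_int_eq_elt by simp

lemma zero_in_OD [simp]: "0 \<in> OD" and one_in_OD [simp]: "1 \<in> OD"
  using of_int_in_OD[of 0] of_int_in_OD[of 1] by simp_all

section \<open>The norm form\<close>

lemma qform_mult:
  "qform (x1 * x2 + d * y1 * y2) (x1 * y2 + x2 * y1 + sigma * y1 * y2) = qform x1 y1 * qform x2 y2"
  unfolding qform_def by (simp add: algebra_simps power2_eq_square)

lemma qform_conj: "qform (x + sigma * y) (- y) = qform x y"
  unfolding qform_def by (simp add: algebra_simps power2_eq_square)

lemma elt_mult_conj: "elt x y * elt (x + sigma * y) (- y) = of_int (qform x y)"
  unfolding elt_mult of_int_eq_elt qform_def by (simp add: algebra_simps power2_eq_square)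

lemma four_qform: "4 * qform x y = (2 * x + sigma * y)^2 - D * y^2"
proof -
  have "D * y^2 = (4 * d + sigma) * y^2"
    using D_eq by (rule arg_cong)
  thus ?thesis
    unfolding qform_def using sigma_squared by (simp add: algebra_simps power2_eq_square)
qed

lemma qform_eq_0_iff: "qform x y = 0 \<longleftrightarrow> x = 0 \<and> y = 0"
proof
  assume "qform x y = 0"
  hence "(2 * x + sigma * y)^2 = D * y^2"
    using four_qform[of x y] by simp
  hence "y = 0"
    by (rule square_eq_D_mult_square)
  thus "x = 0 \<and> y = 0"
    using \<open>qform x y = 0\<close> unfolding qform_def by simp
qed (simp add: qform_def)

text \<open>The pairs (p X + k Y, Y) are the coordinates of the ideal generated by p and k + \<tau>.\<close>
definition lattice_norms_ge :: "int \<Rightarrow> int \<Rightarrow> bool" where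
  "lattice_norms_ge p k \<longleftrightarrow> (\<forall>X Y. (X, Y) \<noteq> (0, 0) \<longrightarrow> p^2 \<le> \<bar>qform (p * X + k * Y) Y\<bar>)"

lemma lattice_norms_geD:
  "lattice_norms_ge p k \<Longrightarrow> (X, Y) \<noteq> (0, 0) \<Longrightarrow> p^2 \<le> \<bar>qform (p * X + k * Y) Y\<bar>"
  unfolding lattice_norms_ge_def by blast

lemma lattice_norms_ge_shift:
  assumes "lattice_norms_ge p k"
  shows "lattice_norms_ge p (k + p * t)"
  unfolding lattice_norms_ge_def
proof (intro allI impI)
  fix X Y :: int
  assume "(X, Y) \<noteq> (0, 0)"
  hence "(X + t * Y, Y) \<noteq> (0, 0)"
    by auto
  hence "p^2 \<le> \<bar>qform (p * (X + t * Y) + k * Y) Y\<bar>"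
    by (rule lattice_norms_geD[OF assms])
  thus "p^2 \<le> \<bar>qform (p * X + (k + p * t) * Y) Y\<bar>"
    by (simp add: algebra_simps)
qed

lemma lattice_norms_ge_conj:
  assumes "lattice_norms_ge p k"
  shows "lattice_norms_ge p (- k - sigma)"
  unfolding lattice_norms_ge_def
proof (intro allI impI)
  fix X Y :: int
  assume "(X, Y) \<noteq> (0, 0)"
  hence "(X, - Y) \<noteq> (0, 0)"
    by auto
  hence "p^2 \<le> \<bar>qform (p * X + k * (- Y)) (- Y)\<bar>"
    by (rule lattice_norms_geD[OF assms])
  moreover have "qform (p * X + k * (- Y)) (- Y) = qform (p * X + (- k - sigma) * Y) Y"
    using qform_conj[of "p * X + (- k - sigma) * Y" Y] by (simp add: algebra_simps)
  ultimately show "p^2 \<le> \<bar>qform (p * X + (- k - sigma) * Y) Y\<bar>"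
    by simp
qed

lemma lattice_norms_ge_reduced:
  assumes "lattice_norms_ge p k" "p > 0"
  obtains k' where "lattice_norms_ge p k'" "0 \<le> 2 * k' + sigma" "2 * k' + sigma \<le> p"
proof -
  define t where "t = (2 * k + sigma) div (2 * p)"
  define r where "r = (2 * k + sigma) mod (2 * p)"
  have r: "0 \<le> r" "r < 2 * p"
    using assms(2) unfolding r_def by auto
  have "2 * k + sigma = 2 * p * t + r"
    unfolding t_def r_def by simp
  hence k1: "2 * (k + p * (- t)) + sigma = r"
    by (simp add: algebra_simps)
  have P1: "lattice_norms_ge p (k + p * (- t))"
    using assms(1) by (rule lattice_norms_ge_shift)
  show ?thesis
  proof (cases "r \<le> p")
    case True
    thus ?thesis
      using that P1 k1 r by auto
  next
    case False
    have "lattice_norms_ge p (- (k + p * (- t)) - sigma + p * 1)"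
      by (rule lattice_norms_ge_shift[OF lattice_norms_ge_conj[OF P1]])
    moreover have "2 * (- (k + p * (- t)) - sigma + p * 1) + sigma = 2 * p - r"
      using k1 by (simp add: algebra_simps)
    ultimately show ?thesis
      using that r False by auto
  qed
qed

lemma lattice_norms_ge_bound:
  assumes "lattice_norms_ge p k" "p > 0"
  shows "D < 0 \<Longrightarrow> 3 * p^2 \<le> - D" and "D > 0 \<Longrightarrow> 5 * p^2 \<le> D"
proof -
  obtain k' where k': "lattice_norms_ge p k'" and b: "0 \<le> 2 * k' + sigma" "2 * k' + sigma \<le> p"
    using lattice_norms_ge_reduced[OF assms] by blast
  define b where "b = 2 * k' + sigma"
  define c where "c = qform k' 1"
  txt \<open>Evaluate the lattice bound at the vectors (k', 1) and (k' - p, 1); note D = b^2 - 4 c.\<close>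
  have "p^2 \<le> \<bar>qform (p * 0 + k' * 1) 1\<bar>"
    using k' by (rule lattice_norms_geD) simp
  hence c_ge: "p * p \<le> \<bar>c\<bar>"
    unfolding c_def by (simp add: power2_eq_square)
  have "p^2 \<le> \<bar>qform (p * (- 1) + k' * 1) 1\<bar>"
    using k' by (rule lattice_norms_geD) simp
  moreover have "qform (p * (- 1) + k' * 1) 1 = c - p * b + p * p"
    unfolding c_def b_def qform_def by (simp add: algebra_simps power2_eq_square)
  ultimately have c_shift_ge: "p * p \<le> \<bar>c - p * b + p * p\<bar>"
    by (simp add: power2_eq_square)
  have D: "D = b * b - 4 * c"
    using four_qform[of k' 1] unfolding b_def c_def by (simp add: power2_eq_square)
  have "b * b \<le> p * p" "0 \<le> p * b" "0 \<le> (p - b) * (3 * p - b)"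
    using b assms(2) unfolding b_def by (simp_all add: mult_mono)
  note bounds = this
  show "3 * p^2 \<le> - D" if "D < 0"
  proof -
    have "c > 0"
      using D bounds that by (smt (verit) zero_le_square)
    thus ?thesis
      using c_ge D bounds by (simp add: power2_eq_square)
  qed
  show "5 * p^2 \<le> D" if "D > 0"
  proof -
    have "c < 0"
      using c_ge D bounds that assms(2) by (smt (verit) mult_pos_pos)
    hence "c - p * b + p * p \<le> - (p * p)"
      using c_ge c_shift_ge bounds by simp
    thus ?thesis
      using D bounds by (simp add: algebra_simps power2_eq_square)
  qed
qed

lemma lattice_norms_ge_no_norm_p:
  assumes "lattice_norms_ge p k" "Factorial_Ring.prime p" "p dvd qform k 1"
  shows "\<bar>qform x y\<bar> \<noteq> p"
proof
  assume h: "\<bar>qform x y\<bar> = p"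
  have p2: "p \<ge> 2"
    using assms(2) by (simp add: prime_ge_2_int)
  have xy: "(x, y) \<noteq> (0, 0)"
    using h p2 qform_eq_0_iff[of x y] by auto
  have "(x - y * k) * (x + y * sigma + y * k) = qform x y - y^2 * qform k 1"
    unfolding qform_def by (simp add: algebra_simps power2_eq_square)
  moreover have "p dvd qform x y - y^2 * qform k 1"
    using h assms(3) by (metis dvd_abs_iff dvd_diff dvd_mult dvd_refl)
  ultimately have "p dvd x - y * k \<or> p dvd x + y * sigma + y * k"
    using assms(2) by (metis prime_dvd_mult_iff)
  thus False
  proof
    assume "p dvd x - y * k"
    then obtain X where X: "x - y * k = p * X" ..
    hence "(X, y) \<noteq> (0, 0)"
      using xy by auto
    hence "p^2 \<le> \<bar>qform (p * X + k * y) y\<bar>"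
      by (rule lattice_norms_geD[OF assms(1)])
    moreover have "p * X + k * y = x"
      using X by (simp add: algebra_simps)
    ultimately show False
      using h p2 by (simp add: power2_eq_square)
  next
    assume "p dvd x + y * sigma + y * k"
    then obtain X where X: "x + y * sigma + y * k = p * X" ..
    hence "(X, - y) \<noteq> (0, 0)"
      using xy by auto
    hence "p^2 \<le> \<bar>qform (p * X + k * (- y)) (- y)\<bar>"
      by (rule lattice_norms_geD[OF assms(1)])
    moreover have "p * X + k * (- y) = x + sigma * y"
      using X by (simp add: algebra_simps)
    ultimately show False
      using h p2 qform_conj[of x y] by (simp add: power2_eq_square)
  qed
qed

definition qnorm :: "complex \<Rightarrow> int" where
  "qnorm z = (THE n. \<exists>x y. z = elt x y \<and> n = qform x y)"

lemma qnorm_elt [simp]: "qnorm (elt x y) = qform x y"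
  unfolding qnorm_def by (rule the_equality) (auto simp: elt_eq_iff)

lemma qnorm_mult: "z \<in> OD \<Longrightarrow> w \<in> OD \<Longrightarrow> qnorm (z * w) = qnorm z * qnorm w"
  unfolding quad_order_iff using elt_mult qform_mult by auto

lemma qnorm_of_int [simp]: "qnorm (of_int n) = n^2"
  unfolding of_int_eq_elt by (simp add: qform_def)

lemma qnorm_one [simp]: "qnorm 1 = 1"
  using qnorm_of_int[of 1] by simp

lemma qnorm_eq_0_iff: "z \<in> OD \<Longrightarrow> qnorm z = 0 \<longleftrightarrow> z = 0"
  unfolding quad_order_iff using qform_eq_0_iff elt_eq_0_iff by auto

lemma qnorm_dvd: "z \<in> OD \<Longrightarrow> \<exists>z'\<in>OD. z * z' = of_int (qnorm z)"
  unfolding quad_order_iff using elt_mult_conj elt_in_OD by fastforce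

lemma invertible_iff_qnorm: "z \<in> OD \<Longrightarrow> (\<exists>w\<in>OD. z * w = 1) \<longleftrightarrow> \<bar>qnorm z\<bar> = 1"
proof
  assume "z \<in> OD" "\<exists>w\<in>OD. z * w = 1"
  then obtain w where "w \<in> OD" "z * w = 1"
    by blast
  hence "qnorm z * qnorm w = 1"
    using qnorm_mult[OF \<open>z \<in> OD\<close>] by (metis qnorm_one)
  thus "\<bar>qnorm z\<bar> = 1"
    using zmult_eq_1_iff by auto
next
  assume z: "z \<in> OD" and n: "\<bar>qnorm z\<bar> = 1"
  obtain z' where z': "z' \<in> OD" "z * z' = of_int (qnorm z)"
    using qnorm_dvd[OF z] by blast
  have "z * (of_int (qnorm z) * z') = of_int (qnorm z * qnorm z)"
    using z'(2) by (simp add: algebra_simps)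
  also have "qnorm z * qnorm z = 1"
    using n abs_mult_self_eq[of "qnorm z"] by simp
  finally show "\<exists>w\<in>OD. z * w = 1"
    using mult_in_OD[OF of_int_in_OD z'(1)] by auto
qed

lemma quad_ring_simps [simp]:
  "carrier RD = OD" "mult RD = (*)" "one RD = 1" "zero RD = 0" "add RD = (+)"
  unfolding quad_ring_def by simp_all

lemma divides_RD_iff: "a divides\<^bsub>RD\<^esub> b \<longleftrightarrow> (\<exists>c\<in>OD. b = a * c)"
  unfolding factor_def by simp

lemma domain_quad_ring: "domain RD"
proof -
  have "abelian_group RD"
    by (rule abelian_groupI)
      (auto simp: add_in_OD intro: uminus_in_OD exI[of _ "- _"] bexI[of _ "- _"] add.assoc add.commute)
  moreover have "comm_monoid RD"
    by (rule comm_monoidI) (auto simp: mult_in_OD mult.assoc mult.commute)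
  ultimately have "cring RD"
    by (rule cringI) (simp add: distrib_right)
  thus ?thesis
    by (rule domain.intro) (unfold_locales, auto)
qed

lemma Units_quad_ring: "Units RD = {z \<in> OD. \<bar>qnorm z\<bar> = 1}"
  unfolding Units_def using invertible_iff_qnorm by (auto simp: mult.commute)

lemma of_int_divides_elt_iff: "of_int p divides\<^bsub>RD\<^esub> elt x y \<longleftrightarrow> p dvd x \<and> p dvd y"
proof
  assume "of_int p divides\<^bsub>RD\<^esub> elt x y"
  then obtain c where "c \<in> OD" "elt x y = of_int p * c"
    unfolding divides_RD_iff by blast
  then obtain u v where "elt x y = elt (p * u) (p * v)"
    unfolding quad_order_iff using of_int_mult_elt by auto
  thus "p dvd x \<and> p dvd y"
    unfolding elt_eq_iff by simp
next
  assume "p dvd x \<and> p dvd y"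
  then obtain u v where "x = p * u" "y = p * v"
    by (auto elim!: dvdE)
  thus "of_int p divides\<^bsub>RD\<^esub> elt x y"
    unfolding divides_RD_iff using of_int_mult_elt elt_in_OD by metis
qed

section \<open>Small primes from lattices of large norm\<close>

abbreviation prime_bound :: real where
  "prime_bound \<equiv> if D < 0 then sqrt (real_of_int \<bar>D\<bar> / 3) else sqrt (real_of_int D / 5)"

abbreviation small_irreducible_primes_prime :: bool where
  "small_irreducible_primes_prime \<equiv> \<forall>p::int. Factorial_Ring.prime p \<and> real_of_int p \<le> prime_bound
     \<and> ring_irreducible\<^bsub>RD\<^esub> (of_int p) \<longrightarrow> ring_prime\<^bsub>RD\<^esub> (of_int p)"

lemma lattice_norms_ge_le_prime_bound:
  assumes "lattice_norms_ge p k" "p > 0"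
  shows "real_of_int p \<le> prime_bound"
proof (cases "D < 0")
  case True
  hence "real_of_int (3 * p^2) \<le> real_of_int (- D)"
    using lattice_norms_ge_bound(1)[OF assms] by (simp only: of_int_le_iff)
  hence "(real_of_int p)^2 \<le> real_of_int \<bar>D\<bar> / 3"
    using True by simp
  thus ?thesis
    using True by (simp add: real_le_rsqrt)
next
  case False
  hence "D > 0"
    using D_nonzero by simp
  hence "real_of_int (5 * p^2) \<le> real_of_int D"
    using lattice_norms_ge_bound(2)[OF assms] by (simp only: of_int_le_iff)
  hence "(real_of_int p)^2 \<le> real_of_int D / 5"
    by simp
  thus ?thesis
    using False by (simp add: real_le_rsqrt)
qed

lemma lattice_norms_ge_ring_irreducible:
  assumes "lattice_norms_ge p k" "Factorial_Ring.prime p" "p dvd qform k 1"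
  shows "ring_irreducible\<^bsub>RD\<^esub> (of_int p)"
proof -
  interpret domain RD
    by (rule domain_quad_ring)
  have p2: "p \<ge> 2"
    using assms(2) by (simp add: prime_ge_2_int)
  hence "2 * 2 \<le> p * p"
    by (intro mult_mono) auto
  hence "4 \<le> p^2"
    by (simp add: power2_eq_square)
  show ?thesis
  proof (rule ring_irreducibleI)
    show "of_int p \<in> carrier RD - {\<zero>\<^bsub>RD\<^esub>}" "of_int p \<notin> Units RD"
      using p2 \<open>4 \<le> p^2\<close> by (simp_all add: Units_quad_ring)
    fix x y
    assume xy: "x \<in> carrier RD" "y \<in> carrier RD" "of_int p = x \<otimes>\<^bsub>RD\<^esub> y"
    show "x \<in> Units RD \<or> y \<in> Units RD"
    proof (rule ccontr)
      assume "\<not> ?thesis"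
      moreover have "qnorm x * qnorm y = p^2"
        using xy qnorm_mult[of x y] qnorm_of_int[of p] by simp
      ultimately have "\<bar>qnorm x\<bar> = p"
        using xy assms(2) abs_eq_prime_if_mult_eq_prime_square by (auto simp: Units_quad_ring)
      moreover obtain u v where "x = elt u v"
        using xy quad_order_iff by auto
      ultimately show False
        using lattice_norms_ge_no_norm_p[OF assms] by simp
    qed
  qed
qed

lemma not_ring_prime_if_dvd_qform:
  assumes "p \<ge> 2" "p dvd qform k 1"
  shows "\<not> ring_prime\<^bsub>RD\<^esub> (of_int p)"
proof
  assume "ring_prime\<^bsub>RD\<^esub> (of_int p)"
  hence prime: "Divisibility.prime RD (of_int p)"
    unfolding ring_prime_def by blast
  have "of_int p divides\<^bsub>RD\<^esub> elt k 1 \<otimes>\<^bsub>RD\<^esub> elt (k + sigma) (- 1)"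
    using assms(2) elt_mult_conj[of k 1] unfolding divides_RD_iff
    by (auto elim!: dvdE intro!: bexI[of _ "of_int _"])
  hence "of_int p divides\<^bsub>RD\<^esub> elt k 1 \<or> of_int p divides\<^bsub>RD\<^esub> elt (k + sigma) (- 1)"
    using prime unfolding Divisibility.prime_def by simp
  thus False
    using assms(1) by (auto simp: of_int_divides_elt_iff zdvd_not_zless)
qed

section \<open>Two-generated ideals are principal\<close>

definition ideal2 :: "complex \<Rightarrow> complex \<Rightarrow> complex set" where
  "ideal2 a b = {u * a + v * b | u v. u \<in> OD \<and> v \<in> OD}"

lemma ideal2_memI: "u \<in> OD \<Longrightarrow> v \<in> OD \<Longrightarrow> u * a + v * b \<in> ideal2 a b"
  unfolding ideal2_def by blast

lemma ideal2_subset: "a \<in> OD \<Longrightarrow> b \<in> OD \<Longrightarrow> ideal2 a b \<subseteq> OD"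
  unfolding ideal2_def using add_in_OD mult_in_OD by blast

lemma ideal2_add:
  assumes "z \<in> ideal2 a b" "w \<in> ideal2 a b"
  shows "z + w \<in> ideal2 a b"
proof -
  obtain u v u' v' where "u \<in> OD" "v \<in> OD" "z = u * a + v * b" "u' \<in> OD" "v' \<in> OD" "w = u' * a + v' * b"
    using assms unfolding ideal2_def by blast
  moreover have "(u * a + v * b) + (u' * a + v' * b) = (u + u') * a + (v + v') * b"
    by (simp add: algebra_simps)
  ultimately show ?thesis
    unfolding ideal2_def by (auto intro: add_in_OD)
qed

lemma ideal2_mult:
  assumes "z \<in> ideal2 a b" "c \<in> OD"
  shows "c * z \<in> ideal2 a b"
proof -
  obtain u v where "u \<in> OD" "v \<in> OD" "z = u * a + v * b"
    using assms(1) unfolding ideal2_def by blast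
  moreover have "c * (u * a + v * b) = (c * u) * a + (c * v) * b"
    by (simp add: algebra_simps)
  ultimately show ?thesis
    unfolding ideal2_def using assms(2) by (auto intro: mult_in_OD)
qed

lemma left_in_ideal2: "a \<in> ideal2 a b" and right_in_ideal2: "b \<in> ideal2 a b"
  unfolding ideal2_def by (force intro: exI[of _ 0] exI[of _ 1])+

definition norms_ge :: "int \<Rightarrow> complex set \<Rightarrow> bool" where
  "norms_ge m I \<longleftrightarrow> (\<forall>z\<in>I. z \<noteq> 0 \<longrightarrow> m \<le> \<bar>qnorm z\<bar>)"

lemma norms_geD: "norms_ge m I \<Longrightarrow> z \<in> I \<Longrightarrow> z \<noteq> 0 \<Longrightarrow> m \<le> \<bar>qnorm z\<bar>"
  unfolding norms_ge_def by blast

lemma of_int_in_ideal2_imp_dvd: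
  assumes p: "Factorial_Ring.prime p"
    and norms: "norms_ge (p^2) (ideal2 (of_int p) \<omega>)"
    and n: "of_int n \<in> ideal2 (of_int p) \<omega>"
  shows "p dvd n"
proof (rule ccontr)
  assume "\<not> p dvd n"
  hence "coprime p n"
    using p prime_imp_coprime by blast
  then obtain s t where st: "s * p + t * n = 1"
    using bezout_int[of p n] by auto
  have "of_int s * of_int p + of_int t * of_int n \<in> ideal2 (of_int p) \<omega>"
    using n by (intro ideal2_add ideal2_mult left_in_ideal2) auto
  moreover have "of_int s * of_int p + of_int t * of_int n = (1::complex)"
    using arg_cong[OF st, of "of_int :: int \<Rightarrow> complex"] by simp
  ultimately have "p^2 \<le> 1"
    using norms_geD[OF norms, of 1] by simp
  thus False
    using prime_ge_2_int[OF p] by (smt (verit) power2_eq_square mult_le_cancel_left1)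
qed

lemma elt_in_ideal2_if_not_dvd:
  assumes "Factorial_Ring.prime p" "\<not> p dvd b"
  obtains k where "elt k 1 \<in> ideal2 (of_int p) (elt a b)"
proof -
  have "coprime b p"
    using assms prime_imp_coprime coprime_commute by blast
  then obtain b' j where bj: "b' * b + j * p = 1"
    using bezout_int[of b p] by auto
  have "elt (a * b') 1 = elt 0 j * of_int p + of_int b' * elt a b"
    using bj by (simp add: mult.commute[of _ "of_int p"] of_int_mult_elt elt_add algebra_simps)
  also have "\<dots> \<in> ideal2 (of_int p) (elt a b)"
    by (intro ideal2_memI) simp_all
  finally show ?thesis
    by (rule that)
qed

lemma elt_in_ideal2_if_not_divides:
  assumes p: "Factorial_Ring.prime p" and norms: "norms_ge (p^2) (ideal2 (of_int p) \<omega>)"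
    and \<omega>: "\<omega> \<in> OD" "\<not> of_int p divides\<^bsub>RD\<^esub> \<omega>"
  obtains k where "elt k 1 \<in> ideal2 (of_int p) \<omega>"
proof -
  obtain a b where ab: "\<omega> = elt a b"
    using \<omega>(1) quad_order_iff by blast
  have "\<not> p dvd b"
  proof
    assume "p dvd b"
    then obtain b' where b': "b = p * b'" ..
    have "of_int a = elt 0 (- b') * of_int p + 1 * \<omega>"
      unfolding ab b' of_int_eq_elt elt_mult by (simp add: elt_add)
    also have "\<dots> \<in> ideal2 (of_int p) \<omega>"
      by (intro ideal2_memI) simp_all
    finally have "p dvd a"
      by (rule of_int_in_ideal2_imp_dvd[OF p norms])
    thus False
      using \<omega>(2) \<open>p dvd b\<close> unfolding ab by (simp add: of_int_divides_elt_iff)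
  qed
  thus ?thesis
    using that elt_in_ideal2_if_not_dvd[OF p] unfolding ab by blast
qed

lemma lattice_norms_ge_if_elt_in_ideal2:
  assumes "p \<noteq> 0"
    and norms: "norms_ge (p^2) (ideal2 (of_int p) \<omega>)"
    and k: "elt k 1 \<in> ideal2 (of_int p) \<omega>"
  shows "lattice_norms_ge p k"
  unfolding lattice_norms_ge_def
proof (intro allI impI)
  fix X Y :: int
  assume XY: "(X, Y) \<noteq> (0, 0)"
  have "elt (p * X + k * Y) Y = elt X 0 * of_int p + of_int Y * elt k 1"
    by (simp add: mult.commute[of _ "of_int p"] of_int_mult_elt elt_add algebra_simps)
  also have "\<dots> \<in> ideal2 (of_int p) \<omega>"
    using k by (intro ideal2_add ideal2_mult left_in_ideal2) auto
  finally have "p^2 \<le> \<bar>qnorm (elt (p * X + k * Y) Y)\<bar>"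
    using XY \<open>p \<noteq> 0\<close> by (intro norms_geD[OF norms]) (auto simp: elt_eq_0_iff)
  thus "p^2 \<le> \<bar>qform (p * X + k * Y) Y\<bar>"
    by simp
qed

context
  fixes \<alpha> \<beta> \<gamma> :: complex
  assumes small: small_irreducible_primes_prime
    and \<alpha>: "\<alpha> \<in> OD" and \<beta>: "\<beta> \<in> OD"
    and \<gamma>: "\<gamma> \<in> ideal2 \<alpha> \<beta>" "\<gamma> \<noteq> 0"
    and \<gamma>_min: "norms_ge \<bar>qnorm \<gamma>\<bar> (ideal2 \<alpha> \<beta>)"
begin

lemma minimal_element_in_OD: "\<gamma> \<in> OD"
  using ideal2_subset[OF \<alpha> \<beta>] \<gamma>(1) by blast

lemma ideal2_norms_ge_prime_square:
  assumes p: "p \<noteq> 0" and \<delta>: "\<delta> \<in> ideal2 \<alpha> \<beta>" and \<omega>: "\<omega> \<in> OD" and eq: "of_int p * \<delta> = \<gamma> * \<omega>"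
  shows "norms_ge (p^2) (ideal2 (of_int p) \<omega>)"
  unfolding norms_ge_def
proof (intro ballI impI)
  fix z
  assume z: "z \<in> ideal2 (of_int p) \<omega>" "z \<noteq> 0"
  obtain u v where uv: "u \<in> OD" "v \<in> OD" "z = u * of_int p + v * \<omega>"
    using z(1) unfolding ideal2_def by blast
  define t where "t = u * \<gamma> + v * \<delta>"
  have t: "t \<in> ideal2 \<alpha> \<beta>"
    unfolding t_def using uv \<gamma>(1) \<delta> by (intro ideal2_add ideal2_mult)
  have "\<gamma> * z = of_int p * t"
    unfolding uv(3) t_def using eq by (simp add: algebra_simps)
  hence "qnorm \<gamma> * qnorm z = p^2 * qnorm t"
    using minimal_element_in_OD z(1) t ideal2_subset[OF of_int_in_OD \<omega>] ideal2_subset[OF \<alpha> \<beta>]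
    by (metis qnorm_mult qnorm_of_int of_int_in_OD subsetD)
  moreover have "t \<noteq> 0"
    using \<open>\<gamma> * z = of_int p * t\<close> \<gamma>(2) z(2) p by auto
  hence "\<bar>qnorm \<gamma>\<bar> \<le> \<bar>qnorm t\<bar>"
    by (rule norms_geD[OF \<gamma>_min t])
  moreover have "\<bar>qnorm \<gamma>\<bar> > 0"
    using qnorm_eq_0_iff[OF minimal_element_in_OD] \<gamma>(2) by simp
  ultimately have "\<bar>qnorm \<gamma>\<bar> * p^2 \<le> \<bar>qnorm \<gamma>\<bar> * \<bar>qnorm z\<bar>"
    by (metis abs_mult abs_power2 mult.commute mult_left_mono zero_le_power2)
  thus "p^2 \<le> \<bar>qnorm z\<bar>"
    using \<open>\<bar>qnorm \<gamma>\<bar> > 0\<close> by simp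
qed

lemma minimal_element_divides_if_divides_prime_multiple:
  assumes p: "Factorial_Ring.prime p" and \<delta>: "\<delta> \<in> ideal2 \<alpha> \<beta>"
    and dvd: "\<gamma> divides\<^bsub>RD\<^esub> (of_int p * \<delta>)"
  shows "\<gamma> divides\<^bsub>RD\<^esub> \<delta>"
proof (rule ccontr)
  assume not_dvd: "\<not> \<gamma> divides\<^bsub>RD\<^esub> \<delta>"
  obtain \<omega> where \<omega>: "\<omega> \<in> OD" "of_int p * \<delta> = \<gamma> * \<omega>"
    using dvd unfolding divides_RD_iff by blast
  have p2: "p \<ge> 2"
    using p by (simp add: prime_ge_2_int)
  have norms: "norms_ge (p^2) (ideal2 (of_int p) \<omega>)"
    using p2 by (intro ideal2_norms_ge_prime_square[OF _ \<delta> \<omega>]) simp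
  have "\<not> of_int p divides\<^bsub>RD\<^esub> \<omega>"
  proof
    assume "of_int p divides\<^bsub>RD\<^esub> \<omega>"
    then obtain \<omega>' where "\<omega>' \<in> OD" "\<omega> = of_int p * \<omega>'"
      unfolding divides_RD_iff by blast
    moreover have "of_int p \<noteq> (0::complex)"
      using p2 by simp
    ultimately have "\<delta> = \<gamma> * \<omega>'"
      using \<omega>(2) by (simp add: algebra_simps)
    thus False
      using not_dvd \<open>\<omega>' \<in> OD\<close> unfolding divides_RD_iff by blast
  qed
  then obtain k where k: "elt k 1 \<in> ideal2 (of_int p) \<omega>"
    using elt_in_ideal2_if_not_divides[OF p norms \<omega>(1)] by blast
  have lattice: "lattice_norms_ge p k"
    using p2 by (intro lattice_norms_ge_if_elt_in_ideal2[OF _ norms k]) simp_all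
  have "elt (k + sigma) (- 1) * elt k 1 \<in> ideal2 (of_int p) \<omega>"
    using k by (rule ideal2_mult) simp
  hence "p dvd qform k 1"
    using elt_mult_conj[of k 1] by (intro of_int_in_ideal2_imp_dvd[OF p norms]) (simp add: mult.commute)
  moreover have "real_of_int p \<le> prime_bound"
    using p2 by (intro lattice_norms_ge_le_prime_bound[OF lattice]) simp
  ultimately have "ring_prime\<^bsub>RD\<^esub> (of_int p)"
    using small p lattice_norms_ge_ring_irreducible[OF lattice p] by blast
  thus False
    using not_ring_prime_if_dvd_qform p2 \<open>p dvd qform k 1\<close> by blast
qed

lemma minimal_element_divides_if_divides_multiple:
  assumes "e > 0" "\<delta> \<in> ideal2 \<alpha> \<beta>" "\<gamma> divides\<^bsub>RD\<^esub> (of_nat e * \<delta>)"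
  shows "\<gamma> divides\<^bsub>RD\<^esub> \<delta>"
  using assms
proof (induction e arbitrary: \<delta> rule: less_induct)
  case (less e)
  show ?case
  proof (cases "e = 1")
    case True
    thus ?thesis
      using less.prems by simp
  next
    case False
    then obtain q where q: "Factorial_Ring.prime q" "q dvd e"
      using prime_factor_nat by blast
    then obtain f where f: "e = q * f"
      by (elim dvdE)
    have "f > 0" "f < e"
      using f less.prems(1) prime_gt_1_nat[OF q(1)] by auto
    have "Factorial_Ring.prime (int q)"
      using q(1) by simp
    moreover have "of_nat f * \<delta> \<in> ideal2 \<alpha> \<beta>"
      using less.prems(2) of_int_in_OD[of "int f"] by (intro ideal2_mult) auto
    moreover have "\<gamma> divides\<^bsub>RD\<^esub> (of_int (int q) * (of_nat f * \<delta>))"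
      using less.prems(3) f by (simp add: algebra_simps)
    ultimately have "\<gamma> divides\<^bsub>RD\<^esub> (of_nat f * \<delta>)"
      by (rule minimal_element_divides_if_divides_prime_multiple)
    thus ?thesis
      using less.IH[OF \<open>f < e\<close> \<open>f > 0\<close> less.prems(2)] by blast
  qed
qed

lemma minimal_element_divides:
  assumes \<delta>: "\<delta> \<in> ideal2 \<alpha> \<beta>"
  shows "\<gamma> divides\<^bsub>RD\<^esub> \<delta>"
proof (rule minimal_element_divides_if_divides_multiple[OF _ \<delta>])
  obtain z' where z': "z' \<in> OD" "\<gamma> * z' = of_int (qnorm \<gamma>)"
    using qnorm_dvd[OF minimal_element_in_OD] by blast
  show "nat \<bar>qnorm \<gamma>\<bar> > 0"
    using qnorm_eq_0_iff[OF minimal_element_in_OD] \<gamma>(2) by simp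
  have "of_nat (nat \<bar>qnorm \<gamma>\<bar>) = (of_int (qnorm \<gamma> * sgn (qnorm \<gamma>)) :: complex)"
    by (metis abs_sgn abs_ge_zero of_int_of_nat_eq nat_0_le)
  hence "of_nat (nat \<bar>qnorm \<gamma>\<bar>) * \<delta> = \<gamma> * (of_int (sgn (qnorm \<gamma>)) * z' * \<delta>)"
    using z'(2) by (simp add: algebra_simps)
  moreover have "of_int (sgn (qnorm \<gamma>)) * z' * \<delta> \<in> OD"
    using z'(1) \<delta> ideal2_subset[OF \<alpha> \<beta>] by (blast intro: mult_in_OD of_int_in_OD)
  ultimately show "\<gamma> divides\<^bsub>RD\<^esub> (of_nat (nat \<bar>qnorm \<gamma>\<bar>) * \<delta>)"
    unfolding divides_RD_iff by blast
qed

end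

lemma ideal2_principal:
  assumes small_irreducible_primes_prime "\<alpha> \<in> OD" "\<beta> \<in> OD" "\<alpha> \<noteq> 0"
  obtains \<gamma> where "\<gamma> \<in> ideal2 \<alpha> \<beta>" "\<gamma> divides\<^bsub>RD\<^esub> \<alpha>" "\<gamma> divides\<^bsub>RD\<^esub> \<beta>"
proof -
  obtain \<gamma> where \<gamma>: "\<gamma> \<in> ideal2 \<alpha> \<beta> \<and> \<gamma> \<noteq> 0"
    and min: "\<And>z. z \<in> ideal2 \<alpha> \<beta> \<and> z \<noteq> 0 \<Longrightarrow> nat \<bar>qnorm \<gamma>\<bar> \<le> nat \<bar>qnorm z\<bar>"
    using ex_has_least_nat[of "\<lambda>z. z \<in> ideal2 \<alpha> \<beta> \<and> z \<noteq> 0" \<alpha> "\<lambda>z. nat \<bar>qnorm z\<bar>"]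
      left_in_ideal2 assms(4) by blast
  have "norms_ge \<bar>qnorm \<gamma>\<bar> (ideal2 \<alpha> \<beta>)"
    unfolding norms_ge_def using min by fastforce
  hence "\<gamma> divides\<^bsub>RD\<^esub> \<delta>" if "\<delta> \<in> ideal2 \<alpha> \<beta>" for \<delta>
    using minimal_element_divides[OF assms(1-3)] \<gamma> that by blast
  thus ?thesis
    using that \<gamma> left_in_ideal2 right_in_ideal2 by blast
qed

section \<open>Factoriality\<close>

lemma ring_irreducible_imp_prime:
  assumes small: small_irreducible_primes_prime
    and \<pi>: "\<pi> \<in> OD" "ring_irreducible\<^bsub>RD\<^esub> \<pi>"
  shows "Divisibility.prime RD \<pi>"
proof -
  interpret domain RD
    by (rule domain_quad_ring)
  show ?thesis
  proof (rule primeI)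
    show "\<pi> \<notin> Units RD"
      using \<pi> by (simp add: ring_irreducibleE(4))
    fix x y
    assume xy: "x \<in> carrier RD" "y \<in> carrier RD" "\<pi> divides\<^bsub>RD\<^esub> x \<otimes>\<^bsub>RD\<^esub> y"
    then obtain c where c: "c \<in> OD" "x * y = \<pi> * c"
      unfolding divides_RD_iff by auto
    have "\<pi> divides\<^bsub>RD\<^esub> y" if not_dvd: "\<not> \<pi> divides\<^bsub>RD\<^esub> x"
    proof -
      have "\<pi> \<noteq> 0"
        using \<pi> ring_irreducibleE(1) by simp
      then obtain \<gamma> where \<gamma>: "\<gamma> \<in> ideal2 \<pi> x" "\<gamma> divides\<^bsub>RD\<^esub> \<pi>" "\<gamma> divides\<^bsub>RD\<^esub> x"
        using ideal2_principal[OF small \<pi>(1)] xy(1) by auto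
      obtain w where w: "w \<in> OD" "\<pi> = \<gamma> * w"
        using \<gamma>(2) unfolding divides_RD_iff by blast
      have \<gamma>_OD: "\<gamma> \<in> OD"
        using \<gamma>(1) ideal2_subset \<pi>(1) xy(1) by auto
      have "\<gamma> \<in> Units RD \<or> w \<in> Units RD"
        using ring_irreducibleE(5)[OF _ \<pi>(2)] \<pi>(1) \<gamma>_OD w by simp
      moreover have "w \<notin> Units RD"
      proof
        assume "w \<in> Units RD"
        then obtain w' where w': "w' \<in> OD" "w * w' = 1"
          unfolding Units_def by auto
        have "\<gamma> = \<pi> * w'"
          using w(2) w'(2) by (simp add: mult.assoc)
        hence "\<pi> divides\<^bsub>RD\<^esub> \<gamma>"
          unfolding divides_RD_iff using w'(1) by blast
        thus False
          using not_dvd divides_trans[OF _ \<gamma>(3)] \<pi>(1) by simp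
      qed
      ultimately obtain g' where g': "g' \<in> OD" "\<gamma> * g' = 1"
        unfolding Units_def by auto
      obtain u v where uv: "u \<in> OD" "v \<in> OD" "\<gamma> = u * \<pi> + v * x"
        using \<gamma>(1) unfolding ideal2_def by blast
      have "y = (\<gamma> * g') * y"
        using g'(2) by simp
      also have "\<dots> = g' * (u * \<pi> * y + v * (x * y))"
        unfolding uv(3) by (simp add: algebra_simps)
      also have "\<dots> = \<pi> * (g' * (u * y + v * c))"
        unfolding c(2) by (simp add: algebra_simps)
      finally show "\<pi> divides\<^bsub>RD\<^esub> y"
        unfolding divides_RD_iff using g'(1) uv xy(2) c(1) by (auto intro!: mult_in_OD add_in_OD)
    qed
    thus "\<pi> divides\<^bsub>RD\<^esub> x \<or> \<pi> divides\<^bsub>RD\<^esub> y"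
      by blast
  qed
qed

lemma primeness_condition_quad_ring:
  assumes small_irreducible_primes_prime
  shows "primeness_condition_monoid (mult_of RD)"
proof -
  interpret domain RD
    by (rule domain_quad_ring)
  show ?thesis
  proof (unfold_locales)
    fix a
    assume a: "a \<in> carrier (mult_of RD)" "irreducible (mult_of RD) a"
    hence "ring_irreducible\<^bsub>RD\<^esub> a"
      by (intro ring_irreducibleI') simp_all
    hence "Divisibility.prime RD a"
      using ring_irreducible_imp_prime[OF assms] a(1) by simp
    thus "Divisibility.prime (mult_of RD) a"
      using prime_eq_prime_mult a(1) by simp
  qed
qed

lemma properfactor_qnorm_less:
  assumes "x \<in> carrier (mult_of RD)" "y \<in> carrier (mult_of RD)" "properfactor (mult_of RD) x y"
  shows "\<bar>qnorm x\<bar> < \<bar>qnorm y\<bar>"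
proof -
  obtain c where c: "c \<in> OD" "c \<noteq> 0" "y = x * c"
    using assms(3) unfolding properfactor_def factor_def by auto
  have x: "x \<in> OD" "x \<noteq> 0"
    using assms(1) by auto
  have "\<bar>qnorm c\<bar> \<noteq> 1"
  proof
    assume "\<bar>qnorm c\<bar> = 1"
    then obtain c' where c': "c' \<in> OD" "c * c' = 1"
      using invertible_iff_qnorm[OF c(1)] by blast
    hence "x = y * c'" "c' \<noteq> 0"
      using c(3) by (auto simp: mult.assoc)
    hence "y divides\<^bsub>mult_of RD\<^esub> x"
      unfolding factor_def using c'(1) by auto
    thus False
      using assms(3) unfolding properfactor_def by blast
  qed
  moreover have "qnorm c \<noteq> 0"
    using qnorm_eq_0_iff[OF c(1)] c(2) by simp
  moreover have "\<bar>qnorm x\<bar> > 0"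
    using qnorm_eq_0_iff[OF x(1)] x(2) by simp
  ultimately have "\<bar>qnorm x\<bar> * 1 < \<bar>qnorm x\<bar> * \<bar>qnorm c\<bar>"
    by (intro mult_strict_left_mono) auto
  thus ?thesis
    using c(3) qnorm_mult[OF x(1) c(1)] by (simp add: abs_mult)
qed

lemma divisor_chain_condition_quad_ring: "divisor_chain_condition_monoid (mult_of RD)"
proof -
  interpret domain RD
    by (rule domain_quad_ring)
  show ?thesis
  proof (unfold_locales)
    have "{(x, y). x \<in> carrier (mult_of RD) \<and> y \<in> carrier (mult_of RD) \<and> properfactor (mult_of RD) x y}
        \<subseteq> measure (\<lambda>z. nat \<bar>qnorm z\<bar>)"
    proof clarify
      fix x y
      assume "x \<in> carrier (mult_of RD)" "y \<in> carrier (mult_of RD)" "properfactor (mult_of RD) x y"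
      hence "\<bar>qnorm x\<bar> < \<bar>qnorm y\<bar>"
        by (rule properfactor_qnorm_less)
      thus "(x, y) \<in> measure (\<lambda>z. nat \<bar>qnorm z\<bar>)"
        by simp
    qed
    thus "wf {(x, y). x \<in> carrier (mult_of RD) \<and> y \<in> carrier (mult_of RD) \<and> properfactor (mult_of RD) x y}"
      by (rule wf_subset[OF wf_measure])
  qed
qed

end

theorem theorem1:
  fixes D :: int
  assumes "quad_disc D"
    and "\<forall>p::int. Factorial_Ring.prime p
            \<and> real_of_int p \<le> (if D < 0 then sqrt (real_of_int \<bar>D\<bar> / 3) else sqrt (real_of_int D / 5))
            \<and> ring_irreducible\<^bsub>quad_ring D\<^esub> (of_int p)
          \<longrightarrow> ring_prime\<^bsub>quad_ring D\<^esub> (of_int p)"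
  shows "factorial_domain (quad_ring D)"
proof -
  interpret quadratic_order D
    by (rule quadratic_order.intro) (rule assms(1))
  have "factorial_monoid (mult_of RD)"
    using divisor_chain_condition_quad_ring primeness_condition_quad_ring[OF assms(2)]
    by (simp add: factorial_condition_one[symmetric])
  thus ?thesis
    unfolding factorial_domain_def using domain_quad_ring by simp
qed

end
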